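(* Let $m,n\ge r\ge1$, let $L:\mathbb{R}^{m\times n}\to\mathbb{R}$ be differentiable and let $\lambda>0$. For $A\in\mathbb{R}^{m\times r}$, $B\in\mathbb{R}^{n\times r}$ let $\mathcal{L}_{L2}(A,B)=L(AB^\top)+\frac{\lambda}{2}\left(\|A\|_F^2+\|B\|_F^2\right)$, and for $W\in\mathbb{R}^{m\times n}$ let $\mathcal{L}_*(W)=L(W)+\lambda\|W\|_*$. Then $(A,B)$ is a local minimum of $\mathcal{L}_{L2}$ if and only if (1) $W=AB^\top$ is a local minimum of $\mathcal{L}_*$ restricted to the set of $m\times n$ matrices of rank at most $r$ (the maximal rank achievable by a product $AB^\top$ of such factors), and (2) $A^\top A=B^\top B$.
   Context: $\|\cdot\|_F$ is the Frobenius norm and $\|W\|_*=\operatorname{Tr}(\sqrt{WW^\top})$ is the nuclear norm (sum of singular values). A local minimum of $\mathcal{L}_*$ restricted to a set $\mathcal{M}$ means a point $W\in\mathcal{M}$ such that $\mathcal{L}_*(W')\ge\mathcal{L}_*(W)$ for all $W'\in\mathcal{M}$ in a neighbourhood of $W$. *)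

theory Defs
  imports "HOL-Analysis.Analysis"
begin

definition frob_sq :: "real^'n^'m \<Rightarrow> real" where
  "frob_sq A = (\<Sum>i\<in>UNIV. \<Sum>j\<in>UNIV. (A $ i $ j)^2)"

definition psd :: "real^'n^'n \<Rightarrow> bool" where
  "psd S \<longleftrightarrow> transpose S = S \<and> (\<forall>x. 0 \<le> x \<bullet> (S *v x))"

definition mat_sqrt :: "real^'n^'n \<Rightarrow> real^'n^'n" where
  "mat_sqrt M = (THE S. psd S \<and> S ** S = M)"

definition nuclear_norm :: "real^'n^'m \<Rightarrow> real" where
  "nuclear_norm W = trace (mat_sqrt (W ** transpose W))"

definition local_min_on :: "('a::topological_space \<Rightarrow> real) \<Rightarrow> 'a set \<Rightarrow> 'a \<Rightarrow> bool" where
  "local_min_on f M x \<longleftrightarrow> x \<in> M \<and>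
     (\<exists>U. open U \<and> x \<in> U \<and> (\<forall>y\<in>U \<inter> M. f x \<le> f y))"

definition L_L2 :: "(real^'n^'m \<Rightarrow> real) \<Rightarrow> real \<Rightarrow> (real^'r^'m) \<times> (real^'r^'n) \<Rightarrow> real" where
  "L_L2 L lam AB = L (fst AB ** transpose (snd AB)) + lam / 2 * (frob_sq (fst AB) + frob_sq (snd AB))"

definition L_nuc :: "(real^'n^'m \<Rightarrow> real) \<Rightarrow> real \<Rightarrow> real^'n^'m \<Rightarrow> real" where
  "L_nuc L lam W = L W + lam * nuclear_norm W"

end

theory Submission
  imports Defs
begin

text \<open>
  For every factorization W = A B^T one has |W|_* \<le> (|A|_F^2 + |B|_F^2)/2, with equality when
  A^T A = B^T B: evaluate the nuclear norm as the sum of |W^T u| over an orthonormal eigenbasis u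
  of W W^T and apply Cauchy-Schwarz and Bessel. Hence L_*(A B^T) \<le> L_L2(A, B), with equality on
  balanced pairs. Every W of rank at most r has a balanced factorization, and balanced
  factorizations of W are unique up to a right orthogonal factor, since A A^T and B B^T are the
  square roots of W W^T and W^T W.

  At a local minimum of L_L2 the factors are balanced: along (A G, B G^-T) the product is fixed,
  so the regulariser must be stationary. Conversely, a balanced (A, B) whose product is a local
  minimum of L_* is a local minimum of L_L2 by the inequality above and continuity of the product.
  For the remaining direction, nearby W' of rank at most r have balanced factorizations which, by
  compactness and uniqueness up to rotation, can be chosen close to (A, B).
\<close>

section \<open>Orthonormal bases and the spectral theorem\<close>

definition orthonormal_basis :: "'a::euclidean_space set \<Rightarrow> bool" where
  "orthonormal_basis U \<longleftrightarrow> finite U \<and> pairwise orthogonal U \<and> (\<forall>u\<in>U. norm u = 1) \<and> span U = UNIV"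

lemma orthonormal_basis_expansion:
  "orthonormal_basis U \<Longrightarrow> (\<Sum>u\<in>U. (x \<bullet> u) *\<^sub>R u) = x"
  unfolding orthonormal_basis_def by (intro orthonormal_basis_expand) auto

lemma orthonormal_basis_inner:
  "orthonormal_basis U \<Longrightarrow> u \<in> U \<Longrightarrow> v \<in> U \<Longrightarrow> u \<bullet> v = (if u = v then 1 else 0)"
  unfolding orthonormal_basis_def pairwise_def orthogonal_def by (auto simp: norm_eq_1)

lemma orthonormal_basis_Parseval:
  assumes "orthonormal_basis U"
  shows "(\<Sum>u\<in>U. (x \<bullet> u) * (y \<bullet> u)) = x \<bullet> y"
proof -
  have "x \<bullet> y = x \<bullet> (\<Sum>u\<in>U. (y \<bullet> u) *\<^sub>R u)"
    using orthonormal_basis_expansion[OF assms] by simp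
  also have "\<dots> = (\<Sum>u\<in>U. (x \<bullet> u) * (y \<bullet> u))"
    by (simp add: inner_sum_right mult.commute)
  finally show ?thesis by simp
qed

lemma orthonormal_basis_independent: "orthonormal_basis U \<Longrightarrow> independent U"
  using pairwise_orthogonal_independent[of U] by (force simp: orthonormal_basis_def)

lemma orthonormal_basis_card: "orthonormal_basis (U::'a::euclidean_space set) \<Longrightarrow> card U = DIM('a)"
  using orthonormal_basis_independent indep_card_eq_dim_span[of U]
  by (metis dim_UNIV orthonormal_basis_def)

lemma orthonormal_basis_extend:
  fixes B :: "'a::euclidean_space set"
  assumes orth: "pairwise orthogonal B" and unit: "\<And>b. b \<in> B \<Longrightarrow> norm b = 1"
  obtains B' where "B \<subseteq> B'" "orthonormal_basis B'"
proof -
  obtain C where CS: "C \<subseteq> orthogonal_comp (span B)" and Corth: "pairwise orthogonal C"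
    and C1: "\<And>x. x \<in> C \<Longrightarrow> norm x = 1" and Ci: "independent C"
    and Csp: "span C = orthogonal_comp (span B)"
    using orthonormal_basis_subspace[OF subspace_orthogonal_comp[of "span B"]] by metis
  have BC: "orthogonal b c" if "b \<in> B" "c \<in> C" for b c
    using CS that span_base by (fastforce simp: orthogonal_comp_def)
  have "span (B \<union> C) = UNIV"
  proof -
    have "x \<in> span (B \<union> C)" for x
    proof -
      have "x \<in> span B + orthogonal_comp (span B)"
        using subspace_sum_orthogonal_comp[of "span B"] by simp
      then obtain a b where ab: "a \<in> span B" "b \<in> span C" "x = a + b"
        by (auto simp: set_plus_def Csp)
      have "a \<in> span (B \<union> C)" using ab(1) by (meson span_mono sup_ge1 subsetD)
      moreover have "b \<in> span (B \<union> C)" using ab(2) by (meson span_mono sup_ge2 subsetD)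
      ultimately show ?thesis using ab(3) span_add by blast
    qed
    then show ?thesis by auto
  qed
  moreover have "pairwise orthogonal (B \<union> C)"
    using orth Corth BC unfolding pairwise_def by (metis Un_iff orthogonal_commute)
  moreover have "finite B" using orth pairwise_orthogonal_imp_finite by blast
  moreover have "finite C" using Ci independent_imp_finite by blast
  ultimately have "orthonormal_basis (B \<union> C)"
    using unit C1 by (auto simp: orthonormal_basis_def)
  then show ?thesis using that by blast
qed

lemma inner_matrix_vector_transpose:
  "(x::real^'m) \<bullet> ((A::real^'n^'m) *v y) = (transpose A *v x) \<bullet> y"
  by (metis dot_lmul_matrix transpose_matrix_vector)

lemma symmetric_matrix_inner:
  "transpose (M::real^'n^'n) = M \<Longrightarrow> x \<bullet> (M *v y) = (M *v x) \<bullet> y"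
  by (metis inner_matrix_vector_transpose)

lemma symmetric_matrixI:
  fixes S :: "real^'n^'n"
  assumes "\<And>x y. x \<bullet> (S *v y) = (S *v x) \<bullet> y"
  shows "transpose S = S"
proof -
  have "S *v y = transpose S *v y" for y
  proof -
    have "\<And>x. x \<bullet> (S *v y - transpose S *v y) = 0"
      using assms inner_matrix_vector_transpose[of _ "transpose S"] by (simp add: inner_diff_right)
    then show ?thesis by (metis inner_eq_zero_iff right_minus_eq)
  qed
  then show ?thesis by (metis matrix_eq)
qed

lemma matrix_vector_mult_orthonormal_expansion:
  assumes "orthonormal_basis U"
  shows "(A::real^'n^'m) *v x = (\<Sum>u\<in>U. (x \<bullet> u) *\<^sub>R (A *v u))"
proof -
  have "A *v x = A *v (\<Sum>u\<in>U. (x \<bullet> u) *\<^sub>R u)"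
    using orthonormal_basis_expansion[OF assms] by simp
  also have "\<dots> = (\<Sum>u\<in>U. (x \<bullet> u) *\<^sub>R (A *v u))"
    by (simp add: vec.sum matrix_vector_mult_scaleR)
  finally show ?thesis .
qed

lemma matrix_eq_on_orthonormal_basis:
  fixes A B :: "real^'n^'m"
  assumes U: "orthonormal_basis U" and eq: "\<And>u. u \<in> U \<Longrightarrow> A *v u = B *v u"
  shows "A = B"
proof -
  have "A *v x = B *v x" for x
    using matrix_vector_mult_orthonormal_expansion[OF U, of A x]
      matrix_vector_mult_orthonormal_expansion[OF U, of B x] eq by simp
  then show ?thesis by (metis matrix_eq)
qed

text \<open>Along v + t w the Rayleigh quotient grows like 2t|w|^2 + O(t^2), so a one-sided maximum at v
  forces the residual w to vanish.\<close>
lemma rayleigh_max_residual_zero: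
  fixes M :: "real^'n^'n"
  assumes sym: "transpose M = M" and v: "v \<bullet> v = 1"
    and w: "w = M *v v - (v \<bullet> (M *v v)) *\<^sub>R v"
    and le: "\<And>t. 0 < t \<Longrightarrow> (v + t *\<^sub>R w) \<bullet> (M *v (v + t *\<^sub>R w))
                 \<le> (v \<bullet> (M *v v)) * ((v + t *\<^sub>R w) \<bullet> (v + t *\<^sub>R w))"
  shows "w = 0"
proof -
  define \<mu> where "\<mu> = v \<bullet> (M *v v)"
  have wv: "w \<bullet> v = 0" using v by (simp add: w inner_diff_left inner_commute[of "M *v v" v])
  have wMv: "w \<bullet> (M *v v) = w \<bullet> w"
  proof -
    have "M *v v = w + \<mu> *\<^sub>R v" by (simp add: w \<mu>_def)
    then show ?thesis by (simp add: inner_add_right wv)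
  qed
  have vMw: "v \<bullet> (M *v w) = w \<bullet> w"
    using symmetric_matrix_inner[OF sym, of v w] wMv by (simp add: inner_commute)
  define c where "c = \<mu> * (w \<bullet> w) - w \<bullet> (M *v w)"
  have key: "2 * (w \<bullet> w) \<le> t * c" if t: "0 < t" for t
  proof -
    have "(v + t *\<^sub>R w) \<bullet> (M *v (v + t *\<^sub>R w)) = \<mu> + 2 * t * (w \<bullet> w) + t^2 * (w \<bullet> (M *v w))"
      by (simp add: matrix_vector_right_distrib matrix_vector_mult_scaleR inner_add_left inner_add_right
          wMv vMw \<mu>_def power2_eq_square algebra_simps)
    moreover have "(v + t *\<^sub>R w) \<bullet> (v + t *\<^sub>R w) = 1 + t^2 * (w \<bullet> w)"
      using v wv by (simp add: inner_add_left inner_add_right inner_commute power2_eq_square algebra_simps)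
    ultimately have "\<mu> + 2 * t * (w \<bullet> w) + t^2 * (w \<bullet> (M *v w)) \<le> \<mu> * (1 + t^2 * (w \<bullet> w))"
      using le[OF t] by (simp add: \<mu>_def)
    then have "t * (2 * (w \<bullet> w)) \<le> t * (t * c)"
      by (simp add: c_def power2_eq_square algebra_simps)
    then show ?thesis using t by simp
  qed
  have "w \<bullet> w \<le> 0"
  proof (rule ccontr)
    assume "\<not> w \<bullet> w \<le> 0"
    then have p: "0 < w \<bullet> w" by linarith
    define t where "t = (w \<bullet> w) / (\<bar>c\<bar> + 1)"
    have t0: "0 < t" using p by (simp add: t_def)
    have "t * c \<le> t * \<bar>c\<bar>" using t0 by (simp add: mult_left_mono)
    also have "\<dots> < w \<bullet> w"
      using p by (simp add: t_def field_simps)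
    finally show False using key[OF t0] p by simp
  qed
  then show ?thesis using inner_ge_zero[of w] by simp
qed

lemma symmetric_invariant_subspace_eigenvector:
  fixes M :: "real^'n^'n"
  assumes sym: "transpose M = M" and V: "subspace V" "V \<noteq> {0}"
    and inv: "\<And>x. x \<in> V \<Longrightarrow> M *v x \<in> V"
  obtains v where "v \<in> V" "norm v = 1" "M *v v = (v \<bullet> (M *v v)) *\<^sub>R v"
proof -
  obtain v0 where v0: "v0 \<in> V" "v0 \<noteq> 0" using V subspace_0 by blast
  define K where "K = V \<inter> sphere 0 1"
  have cK: "compact K" unfolding K_def
    by (intro closed_Int_compact closed_subspace V compact_sphere)
  have "v0 /\<^sub>R norm v0 \<in> K" using v0 V by (auto simp: K_def subspace_scale)
  then have neK: "K \<noteq> {}" by blast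
  have "continuous_on K (\<lambda>x. x \<bullet> (M *v x))"
    by (intro continuous_intros)
  then obtain v where vK: "v \<in> K" and vmax: "\<And>y. y \<in> K \<Longrightarrow> y \<bullet> (M *v y) \<le> v \<bullet> (M *v v)"
    using continuous_attains_sup[OF cK neK] by blast
  have vV: "v \<in> V" and nv: "norm v = 1" using vK by (auto simp: K_def)
  have vv: "v \<bullet> v = 1" using nv by (simp add: norm_eq_1)
  define w where "w = M *v v - (v \<bullet> (M *v v)) *\<^sub>R v"
  have wV: "w \<in> V" unfolding w_def using vV inv V by (simp add: subspace_diff subspace_scale)
  have wv: "w \<bullet> v = 0" using vv by (simp add: w_def inner_diff_left inner_commute[of "M *v v" v])
  have "w = 0"
  proof (rule rayleigh_max_residual_zero[OF sym vv w_def])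
    fix t :: real assume t: "0 < t"
    define x where "x = v + t *\<^sub>R w"
    have xV: "x \<in> V" unfolding x_def using vV wV V by (simp add: subspace_add subspace_scale)
    have "x \<bullet> v = 1" using vv wv by (simp add: x_def inner_add_left)
    then have x0: "x \<noteq> 0" by auto
    then have "x /\<^sub>R norm x \<in> K" using xV V by (auto simp: K_def subspace_scale)
    from vmax[OF this] have "(x \<bullet> (M *v x)) / (norm x)^2 \<le> v \<bullet> (M *v v)"
      by (simp add: matrix_vector_mult_scaleR power2_eq_square divide_inverse mult_ac)
    then show "x \<bullet> (M *v x) \<le> (v \<bullet> (M *v v)) * (x \<bullet> x)"
      using x0 by (simp add: divide_le_eq power2_norm_eq_inner)
  qed
  then show ?thesis using that vV nv by (simp add: w_def)
qed

text \<open>The orthogonal complement of a maximal orthonormal family of eigenvectors is invariant, so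
  if it were nonzero it would contain a further eigenvector.\<close>
theorem symmetric_matrix_eigenbasis:
  fixes M :: "real^'n^'n"
  assumes sym: "transpose M = M"
  obtains U where "orthonormal_basis U" "\<And>u. u \<in> U \<Longrightarrow> M *v u = (u \<bullet> (M *v u)) *\<^sub>R u"
proof -
  define P where "P U \<longleftrightarrow> pairwise orthogonal U \<and> (\<forall>u\<in>U. norm u = 1)
      \<and> (\<forall>u\<in>U. M *v u = (u \<bullet> (M *v u)) *\<^sub>R u)" for U :: "(real^'n) set"
  have bound: "finite U \<and> card U \<le> CARD('n)" if "P U" for U
  proof -
    have "0 \<notin> U" using that by (auto simp: P_def)
    then have "independent U" using that pairwise_orthogonal_independent by (auto simp: P_def)
    then show ?thesis using independent_bound by fastforce
  qed
  have "P {}" by (simp add: P_def)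
  then obtain U where PU: "P U" and max: "\<And>V. P V \<Longrightarrow> card V \<le> card U"
    using ex_has_greatest_nat[of P "{}" card "Suc CARD('n)"] bound by (metis less_Suc_eq_le)
  have "span U = UNIV"
  proof (rule ccontr)
    assume nsp: "span U \<noteq> UNIV"
    define V where "V = orthogonal_comp (span U)"
    have "V \<noteq> {0}"
      using subspace_sum_orthogonal_comp[of "span U"] nsp by (auto simp: V_def set_plus_def)
    moreover have "M *v x \<in> V" if "x \<in> V" for x
    proof -
      have "(\<lambda>x. M *v x) ` U \<subseteq> span U"
        using PU by (auto simp: P_def) (metis span_base span_mul)
      then have "(\<lambda>x. M *v x) ` span U \<subseteq> span U"
        by (metis matrix_vector_mul_linear span_linear_image span_mono span_span)
      then show ?thesis using that symmetric_matrix_inner[OF sym]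
        by (auto simp: V_def orthogonal_comp_def orthogonal_def)
    qed
    ultimately obtain v where v: "v \<in> V" "norm v = 1" "M *v v = (v \<bullet> (M *v v)) *\<^sub>R v"
      using symmetric_invariant_subspace_eigenvector[OF sym subspace_orthogonal_comp] V_def by metis
    have "v \<notin> U"
      using v by (auto simp: V_def orthogonal_comp_def orthogonal_def span_base dest: norm_eq_1[THEN iffD1])
    moreover have "P (insert v U)"
      using PU v unfolding P_def
      by (auto simp: pairwise_insert V_def orthogonal_comp_def span_base orthogonal_commute)
    ultimately show False using max[of "insert v U"] bound[OF PU] by simp
  qed
  then show ?thesis
    using that PU bound[OF PU] by (auto simp: orthonormal_basis_def P_def)
qed

section \<open>Square roots and the nuclear norm\<close>

lemma psd_square_root_on_eigenvector:
  fixes S M :: "real^'n^'n"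
  assumes S: "psd S" and SS: "S ** S = M" and eig: "M *v x = \<mu> *\<^sub>R x" and \<mu>: "0 \<le> \<mu>"
  shows "S *v x = sqrt \<mu> *\<^sub>R x"
proof -
  define s where "s = sqrt \<mu>"
  have s0: "0 \<le> s" and ss: "s * s = \<mu>" using \<mu> by (auto simp: s_def)
  have sym: "transpose S = S" using S by (simp add: psd_def)
  define y where "y = S *v x - s *\<^sub>R x"
  have SSx: "S *v (S *v x) = \<mu> *\<^sub>R x" using SS eig by (simp add: matrix_vector_mul_assoc)
  have Sy: "S *v y = - s *\<^sub>R y"
    by (simp add: y_def matrix_vector_mult_diff_distrib matrix_vector_mult_scaleR SSx
        algebra_simps ss[symmetric])
  have "y = 0"
  proof (cases "s = 0")
    case True
    then have "y = S *v x" and "S *v y = 0" using Sy by (auto simp: y_def)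
    then have "y \<bullet> y = x \<bullet> (S *v y)" using symmetric_matrix_inner[OF sym, of x y] by (simp add: inner_commute)
    then show ?thesis using \<open>S *v y = 0\<close> by simp
  next
    case False
    then have sp: "0 < s" using s0 by simp
    have "0 \<le> y \<bullet> (S *v y)" using S by (simp add: psd_def)
    then have "y \<bullet> y \<le> 0" using sp by (simp add: Sy mult_le_0_iff)
    then show ?thesis using inner_ge_zero[of y] by simp
  qed
  then show ?thesis by (simp add: y_def s_def)
qed

lemma orthonormal_basis_spectral_matrix:
  fixes U :: "(real^'n) set"
  assumes U: "orthonormal_basis U"
  obtains S :: "real^'n^'n" where "\<And>u. u \<in> U \<Longrightarrow> S *v u = c u *\<^sub>R u"
    "\<And>x y. x \<bullet> (S *v y) = (\<Sum>u\<in>U. c u * (x \<bullet> u) * (y \<bullet> u))"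
proof -
  define f where "f x = (\<Sum>u\<in>U. (c u * (x \<bullet> u)) *\<^sub>R u)" for x :: "real^'n"
  have "linear f"
    by (rule linearI) (simp_all add: f_def inner_add_left distrib_left scaleR_add_left sum.distrib
      scaleR_sum_right mult.left_commute)
  then have Sx: "matrix f *v x = f x" for x by simp
  have "f v = c v *\<^sub>R v" if v: "v \<in> U" for v
  proof -
    have "f v = (\<Sum>u\<in>U. if u = v then c v *\<^sub>R v else 0)"
      unfolding f_def by (rule sum.cong) (auto simp: orthonormal_basis_inner[OF U _ v] inner_commute)
    also have "\<dots> = c v *\<^sub>R v" using v U by (simp add: orthonormal_basis_def)
    finally show ?thesis .
  qed
  moreover have "x \<bullet> f y = (\<Sum>u\<in>U. c u * (x \<bullet> u) * (y \<bullet> u))" for x y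
    by (simp add: f_def inner_sum_right mult_ac)
  ultimately show ?thesis using that[of "matrix f"] Sx by simp
qed

lemma psd_square_root_exists:
  fixes M :: "real^'n^'n"
  assumes M: "psd M"
  shows "\<exists>S. psd S \<and> S ** S = M"
proof -
  obtain U where U: "orthonormal_basis U" and eig: "\<And>u. u \<in> U \<Longrightarrow> M *v u = (u \<bullet> (M *v u)) *\<^sub>R u"
    using symmetric_matrix_eigenbasis M unfolding psd_def by blast
  define \<mu> where "\<mu> u = u \<bullet> (M *v u)" for u
  have \<mu>0: "0 \<le> \<mu> u" for u using M by (simp add: psd_def \<mu>_def)
  obtain S where Su: "\<And>u. u \<in> U \<Longrightarrow> S *v u = sqrt (\<mu> u) *\<^sub>R u"
    and inner_S: "\<And>x y. x \<bullet> (S *v y) = (\<Sum>u\<in>U. sqrt (\<mu> u) * (x \<bullet> u) * (y \<bullet> u))"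
    using orthonormal_basis_spectral_matrix[OF U] by metis
  have "psd S"
  proof -
    have "transpose S = S"
      by (rule symmetric_matrixI) (simp add: inner_S inner_commute[of "S *v _"] mult_ac)
    moreover have "0 \<le> x \<bullet> (S *v x)" for x
      by (simp add: inner_S) (intro sum_nonneg, simp add: \<mu>0 mult.assoc)
    ultimately show ?thesis by (simp add: psd_def)
  qed
  moreover have "S ** S = M"
  proof (rule matrix_eq_on_orthonormal_basis[OF U])
    fix u assume "u \<in> U"
    then show "(S ** S) *v u = M *v u"
      using eig \<mu>0 by (simp add: Su matrix_vector_mul_assoc[symmetric] matrix_vector_mult_scaleR
          real_sqrt_mult[symmetric] \<mu>_def)
  qed
  ultimately show ?thesis by blast
qed

lemma psd_square_root_unique:
  fixes M :: "real^'n^'n"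
  assumes M: "psd M" and S1: "psd S1" "S1 ** S1 = M" and S2: "psd S2" "S2 ** S2 = M"
  shows "S1 = S2"
proof -
  obtain U where U: "orthonormal_basis U" and eig: "\<And>u. u \<in> U \<Longrightarrow> M *v u = (u \<bullet> (M *v u)) *\<^sub>R u"
    using symmetric_matrix_eigenbasis M unfolding psd_def by blast
  show ?thesis
  proof (rule matrix_eq_on_orthonormal_basis[OF U])
    fix u assume u: "u \<in> U"
    have "0 \<le> u \<bullet> (M *v u)" using M by (simp add: psd_def)
    then show "S1 *v u = S2 *v u"
      using psd_square_root_on_eigenvector[OF S1 eig[OF u]]
        psd_square_root_on_eigenvector[OF S2 eig[OF u]] by simp
  qed
qed

lemma mat_sqrt_eqI: "psd M \<Longrightarrow> psd S \<Longrightarrow> S ** S = M \<Longrightarrow> mat_sqrt M = S"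
  unfolding mat_sqrt_def by (rule the1_equality) (use psd_square_root_unique in blast)+

lemma mat_sqrt_eigenvector:
  assumes M: "psd M" and eig: "M *v x = \<mu> *\<^sub>R x" and \<mu>: "0 \<le> \<mu>"
  shows "mat_sqrt M *v x = sqrt \<mu> *\<^sub>R x"
proof -
  obtain S where "psd S" "S ** S = M" using psd_square_root_exists[OF M] by blast
  then show ?thesis using mat_sqrt_eqI[OF M] psd_square_root_on_eigenvector eig \<mu> by metis
qed

lemma trace_orthonormal_basis:
  fixes P :: "real^'n^'n"
  assumes U: "orthonormal_basis U"
  shows "trace P = (\<Sum>u\<in>U. u \<bullet> (P *v u))"
proof -
  have "u \<bullet> (P *v u) = (\<Sum>i\<in>UNIV. (P$i \<bullet> u) * (axis i 1 \<bullet> u))" for u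
    unfolding inner_vec_def[of u "P *v u"]
    by (simp only: matrix_vector_mul_component inner_axis' inner_real_def mult_1_left mult.commute)
  then have "(\<Sum>u\<in>U. u \<bullet> (P *v u)) = (\<Sum>u\<in>U. \<Sum>i\<in>UNIV. (P$i \<bullet> u) * (axis i 1 \<bullet> u))"
    by simp
  also have "\<dots> = (\<Sum>i\<in>UNIV. \<Sum>u\<in>U. (P$i \<bullet> u) * (axis i 1 \<bullet> u))" by (rule sum.swap)
  also have "\<dots> = (\<Sum>i\<in>UNIV. P$i \<bullet> axis i 1)" by (simp add: orthonormal_basis_Parseval[OF U])
  also have "\<dots> = trace P" by (simp add: trace_def inner_axis)
  finally show ?thesis by simp
qed

lemma frob_sq_eq_inner: "frob_sq (A::real^'n^'m) = A \<bullet> A"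
  by (simp add: frob_sq_def inner_vec_def power2_eq_square)

lemma frob_sq_eq_norm: "frob_sq (A::real^'n^'m) = (norm A)^2"
  by (simp add: frob_sq_eq_inner power2_norm_eq_inner)

lemma trace_mult_transpose: "trace ((A::real^'n^'m) ** transpose A) = frob_sq A"
  by (simp add: trace_def frob_sq_def matrix_matrix_mult_def transpose_def power2_eq_square)

lemma trace_transpose_mult: "trace (transpose (A::real^'n^'m) ** A) = frob_sq A"
  by (simp add: trace_def frob_sq_def matrix_matrix_mult_def transpose_def power2_eq_square)
     (rule sum.swap)

lemma inner_mult_transpose:
  "x \<bullet> (((A::real^'k^'m) ** transpose A) *v x) = (transpose A *v x) \<bullet> (transpose A *v x)"
  by (simp add: matrix_vector_mul_assoc[symmetric] inner_matrix_vector_transpose[of _ A])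

lemma psd_mult_transpose: "psd ((A::real^'k^'m) ** transpose A)"
  unfolding psd_def by (simp add: matrix_transpose_mul inner_mult_transpose del: transpose_matrix_vector)

text \<open>The singular values of W are the norms |W^T u| for u in such a basis.\<close>
definition left_singular_basis :: "real^'n^'m \<Rightarrow> (real^'m) set \<Rightarrow> bool" where
  "left_singular_basis W U \<longleftrightarrow> orthonormal_basis U \<and>
     (\<forall>u\<in>U. (W ** transpose W) *v u = (norm (transpose W *v u))^2 *\<^sub>R u)"

lemma left_singular_basis_exists: "\<exists>U. left_singular_basis W U"
proof -
  have "transpose (W ** transpose W) = W ** transpose W" by (simp add: matrix_transpose_mul)
  from symmetric_matrix_eigenbasis[OF this] obtain U where "orthonormal_basis U"
    "\<And>u. u \<in> U \<Longrightarrow> (W ** transpose W) *v u = (u \<bullet> ((W ** transpose W) *v u)) *\<^sub>R u" by blast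
  then show ?thesis
    unfolding left_singular_basis_def
    by (metis inner_mult_transpose power2_norm_eq_inner)
qed

lemma left_singular_basis_orthogonal:
  assumes U: "left_singular_basis W U" and u: "u \<in> U" "u' \<in> U" "u \<noteq> u'"
  shows "(transpose W *v u) \<bullet> (transpose W *v u') = 0"
proof -
  have "(transpose W *v u) \<bullet> (transpose W *v u') = u \<bullet> ((W ** transpose W) *v u')"
    by (simp add: matrix_vector_mul_assoc[symmetric] inner_matrix_vector_transpose[of u W]
        del: transpose_matrix_vector)
  also have "\<dots> = 0"
    using U u orthonormal_basis_inner[of U u u'] by (simp add: left_singular_basis_def)
  finally show ?thesis .
qed

lemma nuclear_norm_left_singular_basis:
  assumes U: "left_singular_basis W U"
  shows "nuclear_norm W = (\<Sum>u\<in>U. norm (transpose W *v u))"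
proof -
  have onb: "orthonormal_basis U" using U by (simp add: left_singular_basis_def)
  have "nuclear_norm W = (\<Sum>u\<in>U. u \<bullet> (mat_sqrt (W ** transpose W) *v u))"
    by (simp add: nuclear_norm_def trace_orthonormal_basis[OF onb])
  also have "\<dots> = (\<Sum>u\<in>U. norm (transpose W *v u))"
  proof (rule sum.cong)
    fix u assume u: "u \<in> U"
    have "(W ** transpose W) *v u = (norm (transpose W *v u))^2 *\<^sub>R u"
      using U u by (simp add: left_singular_basis_def)
    from mat_sqrt_eigenvector[OF psd_mult_transpose this]
    have "mat_sqrt (W ** transpose W) *v u = norm (transpose W *v u) *\<^sub>R u" by simp
    moreover have "u \<bullet> u = 1" using orthonormal_basis_inner[OF onb u u] by simp
    ultimately show "u \<bullet> (mat_sqrt (W ** transpose W) *v u) = norm (transpose W *v u)"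
      by simp
  qed simp
  finally show ?thesis .
qed

lemma mat_sqrt_balanced:
  fixes A :: "real^'k^'m" and B :: "real^'k^'n"
  assumes bal: "transpose A ** A = transpose B ** B"
  shows "mat_sqrt ((A ** transpose B) ** transpose (A ** transpose B)) = A ** transpose A"
proof (rule mat_sqrt_eqI)
  have "(A ** transpose B) ** transpose (A ** transpose B) = A ** (transpose B ** B) ** transpose A"
    by (simp add: matrix_transpose_mul matrix_mul_assoc)
  also have "\<dots> = (A ** transpose A) ** (A ** transpose A)"
    by (simp add: bal[symmetric] matrix_mul_assoc)
  finally show "(A ** transpose A) ** (A ** transpose A) = (A ** transpose B) ** transpose (A ** transpose B)"
    by simp
qed (simp_all add: psd_mult_transpose)

lemma frob_sq_balanced:
  "transpose (A::real^'k^'m) ** A = transpose (B::real^'k^'n) ** B \<Longrightarrow> frob_sq A = frob_sq B"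
  by (metis trace_transpose_mult)

lemma nuclear_norm_balanced:
  "transpose (A::real^'k^'m) ** A = transpose (B::real^'k^'n) ** B
   \<Longrightarrow> nuclear_norm (A ** transpose B) = frob_sq A"
  by (simp add: nuclear_norm_def mat_sqrt_balanced trace_mult_transpose)

section \<open>The variational bound for the nuclear norm\<close>

lemma Bessel_inequality:
  fixes v :: "'a \<Rightarrow> 'b::real_inner"
  assumes fin: "finite S"
    and orth: "\<And>u u'. u \<in> S \<Longrightarrow> u' \<in> S \<Longrightarrow> u \<noteq> u' \<Longrightarrow> v u \<bullet> v u' = 0"
    and unit: "\<And>u. u \<in> S \<Longrightarrow> v u \<bullet> v u = 1 \<or> v u = 0"
  shows "(\<Sum>u\<in>S. (v u \<bullet> y)^2) \<le> y \<bullet> y"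
proof -
  define z where "z = (\<Sum>u\<in>S. (v u \<bullet> y) *\<^sub>R v u)"
  have zv: "z \<bullet> v u' = v u' \<bullet> y" if u': "u' \<in> S" for u'
  proof -
    have "z \<bullet> v u' = (\<Sum>u\<in>S. (v u \<bullet> y) * (v u \<bullet> v u'))" by (simp add: z_def inner_sum_left)
    also have "\<dots> = (\<Sum>u\<in>S. if u = u' then v u' \<bullet> y else 0)"
    proof (rule sum.cong)
      fix u assume "u \<in> S"
      then show "(v u \<bullet> y) * (v u \<bullet> v u') = (if u = u' then v u' \<bullet> y else 0)"
        using orth[of u u'] unit[of u'] u' by auto
    qed simp
    also have "\<dots> = v u' \<bullet> y" using fin u' by simp
    finally show ?thesis .
  qed
  have zy: "z \<bullet> y = (\<Sum>u\<in>S. (v u \<bullet> y)^2)" by (simp add: z_def inner_sum_left power2_eq_square)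
  have zz: "z \<bullet> z = (\<Sum>u\<in>S. (v u \<bullet> y)^2)"
    by (subst (2) z_def) (simp add: inner_sum_right zv power2_eq_square)
  have "0 \<le> (y - z) \<bullet> (y - z)" by simp
  then show ?thesis using zy zz by (simp add: inner_diff_left inner_diff_right inner_commute[of y z])
qed

lemma vector_matrix_mult_component: "(x v* (B::real^'k^'n)) $ j = x \<bullet> column j B"
  by (simp add: vector_matrix_mult_def inner_vec_def column_def mult.commute)

lemma sum_norm_transpose_mult_le_frob_sq:
  fixes B :: "real^'k^'n"
  assumes "finite S"
    and "\<And>u u'. u \<in> S \<Longrightarrow> u' \<in> S \<Longrightarrow> u \<noteq> u' \<Longrightarrow> v u \<bullet> v u' = 0"
    and "\<And>u. u \<in> S \<Longrightarrow> v u \<bullet> v u = 1 \<or> v u = 0"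
  shows "(\<Sum>u\<in>S. (norm (transpose B *v v u))^2) \<le> frob_sq B"
proof -
  have "(\<Sum>u\<in>S. (norm (transpose B *v v u))^2) = (\<Sum>u\<in>S. \<Sum>j\<in>UNIV. (v u \<bullet> column j B)^2)"
    unfolding power2_norm_eq_inner transpose_matrix_vector inner_vec_def[of "_ v* B"] vector_matrix_mult_component
    by (simp add: power2_eq_square)
  also have "\<dots> = (\<Sum>j\<in>UNIV. \<Sum>u\<in>S. (v u \<bullet> column j B)^2)" by (rule sum.swap)
  also have "\<dots> \<le> (\<Sum>j\<in>UNIV. column j B \<bullet> column j B)"
    by (rule sum_mono) (rule Bessel_inequality[OF assms])
  also have "\<dots> = frob_sq B"
    by (simp add: frob_sq_def inner_vec_def column_def power2_eq_square) (rule sum.swap)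
  finally show ?thesis .
qed

text \<open>Pairing the left singular basis u of W = A B^T with the normalised right singular vectors v
  gives |W^T u| = (A^T u) \<bullet> (B^T v) \<le> (|A^T u|^2 + |B^T v|^2)/2; summing over u yields the trace of
  A A^T and, by Bessel's inequality, at most the Frobenius norm of B.\<close>
theorem nuclear_norm_mult_transpose_le:
  fixes A :: "real^'k^'m" and B :: "real^'k^'n"
  shows "nuclear_norm (A ** transpose B) \<le> (frob_sq A + frob_sq B) / 2"
proof -
  define W where "W = A ** transpose B"
  obtain U where U: "left_singular_basis W U" using left_singular_basis_exists by blast
  have onb: "orthonormal_basis U" using U by (simp add: left_singular_basis_def)
  define v where "v u = (1 / norm (transpose W *v u)) *\<^sub>R (transpose W *v u)" for u
  have pointwise: "norm (transpose W *v u)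
      \<le> ((norm (transpose A *v u))^2 + (norm (transpose B *v v u))^2) / 2" for u
  proof -
    have "norm (transpose W *v u) = (transpose W *v u) \<bullet> v u"
      by (cases "transpose W *v u = 0")
         (simp_all add: v_def power2_norm_eq_inner[symmetric] power2_eq_square)
    also have "\<dots> = (transpose A *v u) \<bullet> (transpose B *v v u)"
      by (simp add: W_def matrix_transpose_mul matrix_vector_mul_assoc[symmetric]
          inner_matrix_vector_transpose[of _ B] inner_commute del: transpose_matrix_vector)
    also have "\<dots> \<le> norm (transpose A *v u) * norm (transpose B *v v u)"
      by (rule Cauchy_Schwarz_ineq2[THEN abs_le_D1])
    also have "\<dots> \<le> ((norm (transpose A *v u))^2 + (norm (transpose B *v v u))^2) / 2"
      using sum_squares_bound[of "norm (transpose A *v u)" "norm (transpose B *v v u)"]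
      by (simp add: field_simps power2_eq_square)
    finally show ?thesis .
  qed
  have sumA: "(\<Sum>u\<in>U. (norm (transpose A *v u))^2) = frob_sq A"
    by (simp add: trace_orthonormal_basis[OF onb] trace_mult_transpose[symmetric]
        inner_mult_transpose power2_norm_eq_inner del: transpose_matrix_vector)
  have sumB: "(\<Sum>u\<in>U. (norm (transpose B *v v u))^2) \<le> frob_sq B"
  proof (rule sum_norm_transpose_mult_le_frob_sq)
    show "finite U" using onb by (simp add: orthonormal_basis_def)
    show "v u \<bullet> v u' = 0" if "u \<in> U" "u' \<in> U" "u \<noteq> u'" for u u'
      using left_singular_basis_orthogonal[OF U that] by (simp add: v_def)
    show "v u \<bullet> v u = 1 \<or> v u = 0" for u
      by (cases "transpose W *v u = 0")
         (simp_all add: v_def power2_norm_eq_inner[symmetric] power2_eq_square)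
  qed
  have "nuclear_norm W = (\<Sum>u\<in>U. norm (transpose W *v u))"
    by (rule nuclear_norm_left_singular_basis[OF U])
  also have "\<dots> \<le> (\<Sum>u\<in>U. ((norm (transpose A *v u))^2 + (norm (transpose B *v v u))^2) / 2)"
    by (rule sum_mono) (rule pointwise)
  also have "\<dots> \<le> (frob_sq A + frob_sq B) / 2"
    using sumA sumB by (simp add: sum_divide_distrib[symmetric] sum.distrib)
  finally show ?thesis by (simp add: W_def)
qed

lemma frob_sq_mat_1: "frob_sq (mat 1 :: real^'n^'n) = real CARD('n)"
proof -
  have "((mat 1 :: real^'n^'n) $ i $ j)^2 = (if i = j then 1 else 0)" for i j
    by (simp add: mat_def)
  then show ?thesis unfolding frob_sq_def by simp
qed

lemma nuclear_norm_le_frob_sq: "nuclear_norm (W::real^'n^'m) \<le> (frob_sq W + real CARD('n)) / 2"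
  using nuclear_norm_mult_transpose_le[of W "mat 1 :: real^'n^'n"] by (simp add: frob_sq_mat_1)

section \<open>Balanced factorizations\<close>

definition columns_on :: "('a \<Rightarrow> 'r::finite) \<Rightarrow> 'a set \<Rightarrow> ('a \<Rightarrow> real^'m) \<Rightarrow> real^'r^'m" where
  "columns_on \<phi> S c = (\<chi> i k. if k \<in> \<phi> ` S then c (inv_into S \<phi> k) $ i else 0)"

lemma columns_on_mult_transpose:
  fixes \<phi> :: "'a \<Rightarrow> 'r::finite"
  assumes inj: "inj_on \<phi> S"
  shows "columns_on \<phi> S c ** transpose (columns_on \<phi> S d) = (\<chi> i j. \<Sum>u\<in>S. c u $ i * d u $ j)"
proof -
  have "(columns_on \<phi> S c ** transpose (columns_on \<phi> S d)) $ i $ j = (\<Sum>u\<in>S. c u $ i * d u $ j)"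
    for i j
  proof -
    let ?F = "\<lambda>u. c u $ i * d u $ j"
    have "(columns_on \<phi> S c ** transpose (columns_on \<phi> S d)) $ i $ j
        = (\<Sum>k\<in>UNIV. if k \<in> \<phi> ` S then ?F (inv_into S \<phi> k) else 0)"
      unfolding columns_on_def matrix_matrix_mult_def transpose_def by (auto intro!: sum.cong)
    also have "\<dots> = (\<Sum>k\<in>\<phi> ` S. ?F (inv_into S \<phi> k))"
      by (simp add: sum.If_cases)
    also have "\<dots> = (\<Sum>u\<in>S. ?F u)"
      using inj by (simp add: sum.reindex inv_into_f_f)
    finally show ?thesis .
  qed
  then show ?thesis by (simp add: vec_eq_iff)
qed

lemma transpose_columns_on_mult:
  fixes \<phi> :: "'a \<Rightarrow> 'r::finite"
  shows "transpose (columns_on \<phi> S c) ** columns_on \<phi> S d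
     = (\<chi> k l. if k \<in> \<phi> ` S \<and> l \<in> \<phi> ` S then c (inv_into S \<phi> k) \<bullet> d (inv_into S \<phi> l) else 0)"
  by (auto simp: vec_eq_iff columns_on_def matrix_matrix_mult_def transpose_def inner_vec_def)

lemma card_nonzero_singular_le_rank:
  assumes U: "left_singular_basis W U"
  shows "card {u\<in>U. transpose W *v u \<noteq> 0} \<le> rank W"
proof -
  define S where "S = {u\<in>U. transpose W *v u \<noteq> 0}"
  define v where "v u = (1 / norm (transpose W *v u)) *\<^sub>R (transpose W *v u)" for u
  have von: "v u \<bullet> v u' = (if u = u' then 1 else 0)" if "u \<in> S" "u' \<in> S" for u u'
    using that left_singular_basis_orthogonal[OF U, of u u']
    by (auto simp: S_def v_def power2_norm_eq_inner[symmetric] power2_eq_square)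
  have "inj_on v S"
    by (rule inj_onI) (metis von zero_neq_one)
  then have "card S = card (v ` S)" by (simp add: card_image)
  also have "\<dots> \<le> dim (range (\<lambda>x. transpose W *v x))"
  proof (rule independent_card_le_dim)
    have "v u = transpose W *v ((1 / norm (transpose W *v u)) *\<^sub>R u)" for u
      by (simp only: v_def matrix_vector_mult_scaleR)
    then show "v ` S \<subseteq> range (\<lambda>x. transpose W *v x)" by blast
    show "independent (v ` S)"
      by (rule pairwise_orthogonal_independent) (use von in \<open>force simp: pairwise_def orthogonal_def\<close>)+
  qed
  also have "\<dots> = rank W" by (metis rank_dim_range rank_transpose)
  finally show ?thesis by (simp add: S_def)
qed

lemma left_singular_basis_outer_expansion:
  assumes U: "left_singular_basis W U"
  shows "(\<Sum>u\<in>{u\<in>U. transpose W *v u \<noteq> 0}. u $ i * (transpose W *v u) $ j) = W $ i $ j"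
proof -
  have onb: "orthonormal_basis U" using U by (simp add: left_singular_basis_def)
  then have "finite U" by (simp add: orthonormal_basis_def)
  then have "(\<Sum>u\<in>{u\<in>U. transpose W *v u \<noteq> 0}. u $ i * (transpose W *v u) $ j)
      = (\<Sum>u\<in>U. u $ i * (transpose W *v u) $ j)"
    by (intro sum.mono_neutral_left) auto
  also have "\<dots> = (\<Sum>u\<in>U. (axis i 1 \<bullet> u) * (column j W \<bullet> u))"
    by (simp add: inner_axis' inner_axis vector_matrix_mult_component inner_commute[of _ "column j W"])
  also have "\<dots> = W $ i $ j"
    using orthonormal_basis_Parseval[OF onb, of "axis i 1" "column j W"]
    by (simp add: inner_axis' column_def)
  finally show ?thesis .
qed

lemma transpose_columns_on_mult_eqI:
  assumes "inj_on \<phi> S" and "\<And>u u'. u \<in> S \<Longrightarrow> u' \<in> S \<Longrightarrow> a u \<bullet> a u' = b u \<bullet> b u'"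
  shows "transpose (columns_on \<phi> S a) ** columns_on \<phi> S a = transpose (columns_on \<phi> S b) ** columns_on \<phi> S b"
  unfolding transpose_columns_on_mult using assms
  by (intro arg_cong[where f = vec_lambda] ext) (auto simp: inv_into_f_f)

text \<open>The columns of A and B are sqrt(\<sigma>) u and W^T u / sqrt(\<sigma>) for the left singular vectors u
  with singular value \<sigma> = |W^T u| > 0; there are at most rank W of them.\<close>
theorem balanced_factorization_exists:
  fixes W :: "real^'n^'m"
  assumes rk: "rank W \<le> CARD('r)"
  obtains A :: "real^'r^'m" and B :: "real^'r^'n"
  where "A ** transpose B = W" "transpose A ** A = transpose B ** B"
proof -
  obtain U where U: "left_singular_basis W U" using left_singular_basis_exists by blast
  have onb: "orthonormal_basis U" using U by (simp add: left_singular_basis_def)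
  have finU: "finite U" using onb by (simp add: orthonormal_basis_def)
  define S where "S = {u\<in>U. transpose W *v u \<noteq> 0}"
  have SU: "S \<subseteq> U" by (auto simp: S_def)
  have "card S \<le> CARD('r)" using card_nonzero_singular_le_rank[OF U] rk by (simp add: S_def)
  then obtain \<phi> :: "real^'m \<Rightarrow> 'r" where inj: "inj_on \<phi> S"
    using card_le_inj[of S "UNIV :: 'r set"] finU SU finite_subset by auto
  define q where "q u = sqrt (norm (transpose W *v u))" for u
  have q: "q u \<noteq> 0" if "u \<in> S" for u using that by (simp add: q_def S_def)
  define a where "a u = q u *\<^sub>R u" for u
  define b where "b u = (1 / q u) *\<^sub>R (transpose W *v u)" for u
  define A where "A = columns_on \<phi> S a"
  define B where "B = columns_on \<phi> S b"
  have "(A ** transpose B) $ i $ j = W $ i $ j" for i j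
  proof -
    have "(A ** transpose B) $ i $ j = (\<Sum>u\<in>S. u $ i * (transpose W *v u) $ j)"
      using q by (auto simp: A_def B_def columns_on_mult_transpose[OF inj] a_def b_def
          simp del: transpose_matrix_vector intro!: sum.cong)
    then show ?thesis unfolding S_def left_singular_basis_outer_expansion[OF U] .
  qed
  then have "A ** transpose B = W" by (simp add: vec_eq_iff)
  moreover have "a u \<bullet> a u' = b u \<bullet> b u'" if "u \<in> S" "u' \<in> S" for u u'
  proof (cases "u = u'")
    case True
    have "u \<bullet> u = 1" using orthonormal_basis_inner[OF onb, of u u] that SU by auto
    then have "a u \<bullet> a u = norm (transpose W *v u)" by (simp add: a_def q_def)
    also have "\<dots> = b u \<bullet> b u"
      using q[OF that(1)]
      by (simp add: b_def q_def power2_norm_eq_inner[symmetric] power2_eq_square del: transpose_matrix_vector)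
    finally show ?thesis using True by simp
  next
    case False
    then show ?thesis using that SU orthonormal_basis_inner[OF onb, of u u']
      left_singular_basis_orthogonal[OF U, of u u'] by (simp add: a_def b_def subset_iff)
  qed
  then have "transpose A ** A = transpose B ** B"
    unfolding A_def B_def by (rule transpose_columns_on_mult_eqI[OF inj])
  ultimately show ?thesis using that by blast
qed

lemma inner_eq_if_norm_eq_linear:
  fixes h1 :: "'a::real_vector \<Rightarrow> 'b::real_inner" and h2 :: "'a \<Rightarrow> 'c::real_inner"
  assumes l1: "linear h1" and l2: "linear h2" and nm: "\<And>z. norm (h1 z) = norm (h2 z)"
  shows "h1 z \<bullet> h1 z' = h2 z \<bullet> h2 z'"
proof -
  have sq: "h1 x \<bullet> h1 x = h2 x \<bullet> h2 x" for x using nm[of x] by (simp add: norm_eq)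
  have "h1 (z + z') \<bullet> h1 (z + z') = h2 (z + z') \<bullet> h2 (z + z')" by (rule sq)
  then have "h1 z \<bullet> h1 z + 2 * (h1 z \<bullet> h1 z') + h1 z' \<bullet> h1 z'
      = h2 z \<bullet> h2 z + 2 * (h2 z \<bullet> h2 z') + h2 z' \<bullet> h2 z'"
    by (simp add: linear_add[OF l1] linear_add[OF l2] inner_add_left inner_add_right inner_commute)
  then show ?thesis using sq[of z] sq[of z'] by simp
qed

lemma orthogonal_transformation_orthonormal_basis:
  fixes B :: "'a::euclidean_space set" and f :: "'a \<Rightarrow> 'a"
  assumes B: "orthonormal_basis B"
    and f: "\<And>b b'. b \<in> B \<Longrightarrow> b' \<in> B \<Longrightarrow> f b \<bullet> f b' = (if b = b' then 1 else 0)"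
  obtains g where "orthogonal_transformation g" "\<And>b. b \<in> B \<Longrightarrow> g b = f b"
proof -
  obtain g where lg: "linear g" and gf: "\<And>b. b \<in> B \<Longrightarrow> g b = f b"
    using linear_independent_extend[OF orthonormal_basis_independent[OF B], of f] by blast
  have gexp: "g v = (\<Sum>b\<in>B. (v \<bullet> b) *\<^sub>R f b)" for v
  proof -
    have "g v = g (\<Sum>b\<in>B. (v \<bullet> b) *\<^sub>R b)" using orthonormal_basis_expansion[OF B] by simp
    also have "\<dots> = (\<Sum>b\<in>B. (v \<bullet> b) *\<^sub>R f b)"
      by (simp add: linear_sum[OF lg] linear_scale[OF lg] gf)
    finally show ?thesis .
  qed
  have isometric: "norm (g v) = norm v" for v
  proof -
    have fg: "f b \<bullet> g v = v \<bullet> b" if "b \<in> B" for b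
    proof -
      have "f b \<bullet> g v = (\<Sum>b'\<in>B. (v \<bullet> b') * (f b \<bullet> f b'))" by (simp add: gexp inner_sum_right)
      also have "\<dots> = (\<Sum>b'\<in>B. if b' = b then v \<bullet> b else 0)"
        by (rule sum.cong) (auto simp: f that)
      also have "\<dots> = v \<bullet> b" using that B by (simp add: orthonormal_basis_def)
      finally show ?thesis .
    qed
    have "g v \<bullet> g v = (\<Sum>b\<in>B. (v \<bullet> b) * (v \<bullet> b))"
      by (subst (1) gexp) (simp add: inner_sum_left fg)
    also have "\<dots> = v \<bullet> v" by (rule orthonormal_basis_Parseval[OF B])
    finally show ?thesis by (simp add: norm_eq)
  qed
  show ?thesis using that[of g] lg gf isometric by (simp add: orthogonal_transformation)
qed

lemma bij_betw_extend:
  assumes fin: "finite B'" "finite C'" and sub: "B \<subseteq> B'" "C \<subseteq> C'"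
    and card: "card B' = card C'" and f: "bij_betw f B C"
  obtains F where "bij_betw F B' C'" "\<And>b. b \<in> B \<Longrightarrow> F b = f b"
proof -
  have "card (B' - B) = card (C' - C)"
    using fin sub card bij_betw_same_card[OF f] by (simp add: card_Diff_subset finite_subset)
  then obtain \<psi> where \<psi>: "bij_betw \<psi> (B' - B) (C' - C)"
    using bij_betw_iff_card[of "B' - B" "C' - C"] fin by auto
  define F where "F b = (if b \<in> B then f b else \<psi> b)" for b
  have "bij_betw F B C" using bij_betw_cong[of B F f C] f by (simp add: F_def)
  moreover have "bij_betw F (B' - B) (C' - C)"
    using bij_betw_cong[of "B' - B" F \<psi>] \<psi> by (simp add: F_def)
  ultimately have "bij_betw F (B \<union> (B' - B)) (C \<union> (C' - C))"
    by (rule bij_betw_combine) simp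
  then show ?thesis using that sub by (simp add: Un_absorb1 F_def)
qed

text \<open>Both orthonormal families are completed to orthonormal bases, which have the same
  cardinality, so the map extends bijectively between the complements.\<close>
lemma orthonormal_map_extends:
  fixes B :: "'a::euclidean_space set" and f :: "'a \<Rightarrow> 'a"
  assumes orth: "pairwise orthogonal B" and unit: "\<And>b. b \<in> B \<Longrightarrow> norm b = 1"
    and f: "\<And>b b'. b \<in> B \<Longrightarrow> b' \<in> B \<Longrightarrow> f b \<bullet> f b' = (if b = b' then 1 else 0)"
  obtains g where "orthogonal_transformation g" "\<And>b. b \<in> B \<Longrightarrow> g b = f b"
proof -
  have "inj_on f B" by (rule inj_onI) (metis f zero_neq_one)
  then have bij: "bij_betw f B (f ` B)" by (rule inj_on_imp_bij_betw)
  have "pairwise orthogonal (f ` B)" "\<And>x. x \<in> f ` B \<Longrightarrow> norm x = 1"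
    using f by (auto simp: pairwise_def orthogonal_def norm_eq_1)
  then obtain C' where CC': "f ` B \<subseteq> C'" and C': "orthonormal_basis C'"
    using orthonormal_basis_extend by blast
  obtain B' where BB': "B \<subseteq> B'" and B': "orthonormal_basis B'"
    using orthonormal_basis_extend[OF orth unit] by blast
  have "finite B'" "finite C'" using B' C' by (auto simp: orthonormal_basis_def)
  then obtain F where F: "bij_betw F B' C'" and Ff: "\<And>b. b \<in> B \<Longrightarrow> F b = f b"
    using bij_betw_extend[OF _ _ BB' CC' _ bij] orthonormal_basis_card[OF B']
      orthonormal_basis_card[OF C'] by metis
  have "F b \<bullet> F b' = (if b = b' then 1 else 0)" if "b \<in> B'" "b' \<in> B'" for b b'
  proof -
    have "F b \<in> C'" "F b' \<in> C'" "F b = F b' \<longleftrightarrow> b = b'"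
      using F that by (auto simp: bij_betw_def inj_on_def)
    then show ?thesis using orthonormal_basis_inner[OF C'] by simp
  qed
  from orthogonal_transformation_orthonormal_basis[OF B' this] obtain g
    where g: "orthogonal_transformation g" "\<And>b. b \<in> B' \<Longrightarrow> g b = F b" by blast
  show ?thesis by (rule that[OF g(1)]) (use g(2) BB' Ff in auto)
qed

lemma orthogonal_transformation_intertwining:
  fixes h1 h2 :: "'a::euclidean_space \<Rightarrow> 'b::euclidean_space"
  assumes l1: "linear h1" and l2: "linear h2" and nm: "\<And>z. norm (h1 z) = norm (h2 z)"
  obtains g where "orthogonal_transformation g" "\<And>z. g (h1 z) = h2 z"
proof -
  obtain B where BS: "B \<subseteq> range h1" and Borth: "pairwise orthogonal B"
    and B1: "\<And>x. x \<in> B \<Longrightarrow> norm x = 1" and Bi: "independent B" and Bsp: "span B = range h1"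
    using orthonormal_basis_subspace[OF linear_subspace_image[OF l1 subspace_UNIV]] by metis
  have finB: "finite B" using Bi independent_imp_finite by blast
  define pre where "pre b = (SOME z. h1 z = b)" for b
  have h1_pre: "h1 (pre b) = b" if "b \<in> B" for b
    using BS that unfolding pre_def by (metis (mono_tags, lifting) rangeE someI_ex subsetD)
  have "h2 (pre b) \<bullet> h2 (pre b') = (if b = b' then 1 else 0)" if "b \<in> B" "b' \<in> B" for b b'
    using inner_eq_if_norm_eq_linear[OF l1 l2 nm, of "pre b" "pre b'"] h1_pre that Borth B1
    by (auto simp: pairwise_def orthogonal_def norm_eq_1)
  from orthonormal_map_extends[OF Borth B1 this] obtain g
    where og: "orthogonal_transformation g" and gB: "\<And>b. b \<in> B \<Longrightarrow> g b = h2 (pre b)" by metis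
  have lg: "linear g" using og by (simp add: orthogonal_transformation)
  have "g (h1 z) = h2 z" for z
  proof -
    have expand: "h1 z = (\<Sum>b\<in>B. (h1 z \<bullet> b) *\<^sub>R b)"
      using orthonormal_basis_expand[OF Borth B1 _ finB] Bsp by simp
    define w where "w = (\<Sum>b\<in>B. (h1 z \<bullet> b) *\<^sub>R pre b)"
    have "h1 w = h1 z"
      by (subst expand) (simp add: w_def linear_sum[OF l1] linear_scale[OF l1] h1_pre)
    then have "h2 (z - w) = 0" using nm[of "z - w"] by (simp add: linear_diff[OF l1])
    then have "h2 z = h2 w" by (simp add: linear_diff[OF l2])
    also have "\<dots> = g (h1 z)"
      by (subst expand) (simp add: w_def linear_sum[OF l2] linear_scale[OF l2]
          linear_sum[OF lg] linear_scale[OF lg] gB)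
    finally show ?thesis by simp
  qed
  with og that show ?thesis by blast
qed

lemma inner_stacked_transpose:
  fixes A :: "real^'k^'m" and B :: "real^'k^'n"
  shows "(transpose A *v x + transpose B *v y) \<bullet> (transpose A *v x + transpose B *v y)
    = x \<bullet> ((A ** transpose A) *v x) + 2 * (x \<bullet> ((A ** transpose B) *v y)) + y \<bullet> ((B ** transpose B) *v y)"
proof -
  have "(transpose A *v x) \<bullet> (transpose B *v y) = x \<bullet> ((A ** transpose B) *v y)"
    by (simp add: matrix_vector_mul_assoc[symmetric] inner_matrix_vector_transpose[of x A]
        del: transpose_matrix_vector)
  then show ?thesis using inner_commute[of "transpose B *v y" "transpose A *v x"]
    by (simp add: inner_mult_transpose inner_add_left inner_add_right del: transpose_matrix_vector)
qed

text \<open>A A^T and B B^T are the square roots of W W^T and W^T W, so the stacked factor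
  [A; B] has a Gram matrix determined by W; factors with equal Gram matrices differ by an
  orthogonal matrix.\<close>
theorem balanced_factorization_unique:
  fixes A A2 :: "real^'r^'m" and B B2 :: "real^'r^'n"
  assumes bal: "transpose A ** A = transpose B ** B" and bal2: "transpose A2 ** A2 = transpose B2 ** B2"
    and eq: "A ** transpose B = A2 ** transpose B2"
  obtains Q where "orthogonal_matrix Q" "A2 = A ** Q" "B2 = B ** Q"
proof -
  have AA: "A ** transpose A = A2 ** transpose A2"
    using mat_sqrt_balanced[OF bal] mat_sqrt_balanced[OF bal2] eq by simp
  have "B ** transpose A = B2 ** transpose A2"
    using arg_cong[OF eq, of transpose] by (simp add: matrix_transpose_mul)
  then have BB: "B ** transpose B = B2 ** transpose B2"
    using mat_sqrt_balanced[OF bal[symmetric]] mat_sqrt_balanced[OF bal2[symmetric]] by simp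
  define h1 where "h1 p = transpose A *v fst p + transpose B *v snd p" for p :: "(real^'m) \<times> (real^'n)"
  define h2 where "h2 p = transpose A2 *v fst p + transpose B2 *v snd p" for p :: "(real^'m) \<times> (real^'n)"
  have "linear h1" "linear h2"
    by (rule linearI; simp add: h1_def h2_def matrix_vector_right_distrib matrix_vector_mult_scaleR
        scaleR_add_right del: transpose_matrix_vector)+
  moreover have "norm (h1 p) = norm (h2 p)" for p
  proof -
    have "h1 p \<bullet> h1 p = h2 p \<bullet> h2 p"
      unfolding h1_def h2_def inner_stacked_transpose AA BB eq ..
    then show ?thesis by (simp add: norm_eq)
  qed
  ultimately obtain g where og: "orthogonal_transformation g" and gh: "\<And>p. g (h1 p) = h2 p"
    using orthogonal_transformation_intertwining by blast
  define Q where "Q = transpose (matrix g)"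
  have gQ: "g v = transpose Q *v v" for v
    using og by (simp add: Q_def orthogonal_transformation del: transpose_matrix_vector)
  have "transpose Q ** transpose A = transpose A2"
    using gh[of "(_, 0)"] by (simp add: matrix_eq h1_def h2_def gQ matrix_vector_mul_assoc del: transpose_matrix_vector)
  moreover have "transpose Q ** transpose B = transpose B2"
    using gh[of "(0, _)"] by (simp add: matrix_eq h1_def h2_def gQ matrix_vector_mul_assoc del: transpose_matrix_vector)
  moreover have "orthogonal_matrix Q"
    using og by (simp add: Q_def orthogonal_transformation_matrix)
  ultimately show ?thesis using that by (metis matrix_transpose_mul transpose_transpose)
qed

section \<open>Local minima\<close>

lemma L_nuc_le_L_L2: "0 \<le> lam \<Longrightarrow> L_nuc L lam (A ** transpose B) \<le> L_L2 L lam (A, B)"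
  using mult_left_mono[OF nuclear_norm_mult_transpose_le[of A B]] by (simp add: L_L2_def L_nuc_def)

lemma L_L2_balanced:
  "transpose A ** A = transpose B ** B \<Longrightarrow> L_L2 L lam (A, B) = L_nuc L lam (A ** transpose B)"
  using frob_sq_balanced nuclear_norm_balanced by (simp add: L_L2_def L_nuc_def) fastforce

lemma rank_mult_transpose_le: "rank ((A::real^'r^'m) ** transpose (B::real^'r^'n)) \<le> CARD('r)"
  using rank_mul_le_left[of A "transpose B"] rank_bound[of A] by simp

lemma tendsto_matrix_mult:
  fixes f :: "'a \<Rightarrow> real^'n^'m" and g :: "'a \<Rightarrow> real^'p^'n"
  assumes "(f \<longlongrightarrow> a) F" "(g \<longlongrightarrow> b) F"
  shows "((\<lambda>x. f x ** g x) \<longlongrightarrow> a ** b) F"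
proof (intro vec_tendstoI)
  fix i j
  have "((\<lambda>x. f x $ i $ k) \<longlongrightarrow> a $ i $ k) F" "((\<lambda>x. g x $ k $ j) \<longlongrightarrow> b $ k $ j) F" for k
    by (intro tendsto_vec_nth assms)+
  then show "((\<lambda>x. (f x ** g x) $ i $ j) \<longlongrightarrow> (a ** b) $ i $ j) F"
    unfolding matrix_matrix_mult_def by (simp, intro tendsto_sum tendsto_mult)
qed

lemma tendsto_transpose:
  fixes f :: "'a \<Rightarrow> real^'n^'m"
  assumes "(f \<longlongrightarrow> a) F"
  shows "((\<lambda>x. transpose (f x)) \<longlongrightarrow> transpose a) F"
  unfolding transpose_def by (intro vec_tendstoI) (simp, intro tendsto_vec_nth assms)

lemma continuous_on_mult_transpose:
  "continuous_on UNIV (\<lambda>p::(real^'r^'m) \<times> (real^'r^'n). fst p ** transpose (snd p))"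
  unfolding continuous_on_def
  by (intro ballI tendsto_matrix_mult tendsto_transpose tendsto_fst tendsto_snd tendsto_ident_at)

theorem L_L2_local_min_if_L_nuc_local_min:
  fixes A :: "real^'r^'m" and B :: "real^'r^'n"
  assumes min: "local_min_on (L_nuc L lam) {W. rank W \<le> CARD('r)} (A ** transpose B)"
    and bal: "transpose A ** A = transpose B ** B" and lam: "0 \<le> lam"
  shows "local_min_on (L_L2 L lam) UNIV (A, B)"
proof -
  obtain V where V: "open V" "A ** transpose B \<in> V"
    and le: "\<And>W. W \<in> V \<Longrightarrow> rank W \<le> CARD('r) \<Longrightarrow> L_nuc L lam (A ** transpose B) \<le> L_nuc L lam W"
    using min by (auto simp: local_min_on_def)
  define U where "U = (\<lambda>p::(real^'r^'m) \<times> (real^'r^'n). fst p ** transpose (snd p)) -` V"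
  have "open U" unfolding U_def by (rule open_vimage[OF V(1) continuous_on_mult_transpose])
  moreover have "L_L2 L lam (A, B) \<le> L_L2 L lam y" if "y \<in> U" for y
  proof -
    obtain A' B' where y: "y = (A', B')" by (cases y)
    have "L_L2 L lam (A, B) \<le> L_nuc L lam (A' ** transpose B')"
      using le[of "A' ** transpose B'"] that rank_mult_transpose_le[of A' B'] L_L2_balanced[OF bal]
      by (simp add: U_def y)
    also have "\<dots> \<le> L_L2 L lam y" unfolding y by (rule L_nuc_le_L_L2[OF lam])
    finally show ?thesis .
  qed
  ultimately show ?thesis
    using V(2) unfolding local_min_on_def by (intro conjI exI[of _ U]) (auto simp: U_def)
qed

lemma local_min_on_UNIV_along_path:
  fixes f :: "'a::topological_space \<Rightarrow> real" and p :: "real \<Rightarrow> 'a"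
  assumes min: "local_min_on f UNIV (p 0)" and lim: "(p \<longlongrightarrow> p 0) (at 0)"
  obtains d where "d > 0" "\<And>t. \<bar>t\<bar> < d \<Longrightarrow> f (p 0) \<le> f (p t)"
proof -
  obtain U where U: "open U" "p 0 \<in> U" and le: "\<And>y. y \<in> U \<Longrightarrow> f (p 0) \<le> f y"
    using min by (auto simp: local_min_on_def)
  have "eventually (\<lambda>t. p t \<in> U) (at 0)" using topological_tendstoD[OF lim U] .
  then obtain d where d: "d > 0" "\<And>t. t \<noteq> 0 \<Longrightarrow> dist t 0 < d \<Longrightarrow> p t \<in> U"
    by (auto simp: eventually_at)
  have "f (p 0) \<le> f (p t)" if "\<bar>t\<bar> < d" for t
    using d that le by (cases "t = 0") auto
  with d that show ?thesis by blast
qed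

text \<open>Moving the factors along A + a(t) C, B + b(t) D without changing the product leaves only
  the regulariser to vary, so its derivative a'(0) 2 A\<bullet>C + b'(0) 2 B\<bullet>D must vanish.\<close>
lemma L_L2_local_min_product_preserving_curve:
  fixes A C :: "real^'r^'m" and B D :: "real^'r^'n"
  assumes min: "local_min_on (L_L2 L lam) UNIV (A, B)" and lam: "lam > 0"
    and prod: "\<And>t. \<bar>t\<bar> < 1/2 \<Longrightarrow> (A + a t *\<^sub>R C) ** transpose (B + b t *\<^sub>R D) = A ** transpose B"
    and a0: "a 0 = 0" and b0: "b 0 = 0"
    and da: "(a has_real_derivative 1) (at 0)" and db: "(b has_real_derivative -1) (at 0)"
  shows "A \<bullet> C = B \<bullet> D"
proof -
  define p where "p t = (A + a t *\<^sub>R C, B + b t *\<^sub>R D)" for t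
  have p0: "p 0 = (A, B)" by (simp add: p_def a0 b0)
  have "(a \<longlongrightarrow> 0) (at 0)" "(b \<longlongrightarrow> 0) (at 0)"
    using DERIV_isCont[OF da] DERIV_isCont[OF db] a0 b0 by (simp_all add: isCont_def)
  then have "(p \<longlongrightarrow> (A + 0 *\<^sub>R C, B + 0 *\<^sub>R D)) (at 0)"
    unfolding p_def by (intro tendsto_intros)
  then obtain d where d: "d > 0" and le: "\<And>t. \<bar>t\<bar> < d \<Longrightarrow> L_L2 L lam (p 0) \<le> L_L2 L lam (p t)"
    using local_min_on_UNIV_along_path[of "L_L2 L lam" p] min by (auto simp: p0)
  define g where "g t = A \<bullet> A + 2 * a t * (A \<bullet> C) + (a t)^2 * (C \<bullet> C)
     + (B \<bullet> B + 2 * b t * (B \<bullet> D) + (b t)^2 * (D \<bullet> D))" for t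
  have L_p: "L_L2 L lam (p t) = L (A ** transpose B) + lam / 2 * g t" if "\<bar>t\<bar> < 1/2" for t
    using prod[OF that]
    by (simp add: L_L2_def p_def frob_sq_eq_inner g_def inner_add_left inner_add_right
        inner_commute[of C A] inner_commute[of D B] power2_eq_square algebra_simps)
  have g_min: "\<forall>t. \<bar>0 - t\<bar> < min d (1/2) \<longrightarrow> g 0 \<le> g t"
  proof (intro allI impI)
    fix t assume "\<bar>0 - t\<bar> < min d (1/2)"
    then have "L (A ** transpose B) + lam / 2 * g 0 \<le> L (A ** transpose B) + lam / 2 * g t"
      using le[of t] L_p[of t] L_p[of 0] by simp
    then show "g 0 \<le> g t" using lam by simp
  qed
  have g': "(g has_real_derivative (2 * (A \<bullet> C) - 2 * (B \<bullet> D))) (at 0)"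
  proof -
    have "(g has_real_derivative (2 * 1 * (A \<bullet> C) + 2 * (a 0) * 1 * (C \<bullet> C)
        + (2 * (-1) * (B \<bullet> D) + 2 * (b 0) * (-1) * (D \<bullet> D)))) (at 0)"
      unfolding g_def by (rule derivative_eq_intros da db refl | simp)+
    then show ?thesis by (simp add: a0 b0)
  qed
  from DERIV_local_min[OF g' _ g_min] d show ?thesis by simp
qed

definition matrix_unit :: "'r::finite \<Rightarrow> 'r \<Rightarrow> real^'r^'r" where
  "matrix_unit i j = (\<chi> a b. if a = i \<and> b = j then 1 else 0)"

lemma inner_mult_matrix_unit: "(A::real^'r^'m) \<bullet> (A ** matrix_unit i j) = (transpose A ** A) $ j $ i"
proof -
  have "(A ** matrix_unit i j) $ x $ y = (if y = j then A $ x $ i else 0)" for x y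
    by (simp add: matrix_matrix_mult_def matrix_unit_def if_distrib[of "\<lambda>z. _ * z"] cong: if_cong)
  then show ?thesis
    by (simp add: inner_vec_def matrix_matrix_mult_def transpose_def if_distrib[of "\<lambda>z. _ * z"]
        mult.commute cong: if_cong)
qed

lemma transpose_matrix_unit: "transpose (matrix_unit i j) = matrix_unit j i"
  by (simp add: transpose_def matrix_unit_def vec_eq_iff conj_commute)

lemma matrix_unit_square: "matrix_unit i j ** matrix_unit i j = (if i = j then matrix_unit i j else 0)"
  by (auto simp: matrix_matrix_mult_def matrix_unit_def vec_eq_iff if_distrib[of "\<lambda>z. _ * z"]
      cong: if_cong)

lemma transpose_mult_self_symmetric:
  "(transpose (B::real^'r^'n) ** B) $ i $ j = (transpose B ** B) $ j $ i"
  by (simp add: matrix_matrix_mult_def transpose_def mult.commute)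

lemma matrix_add_rdistrib: "((A::real^'n^'m) + B) ** C = A ** C + B ** C"
  by (simp add: matrix_matrix_mult_def vec_eq_iff sum.distrib distrib_right)

lemma matrix_diff_ldistrib: "(A::real^'n^'m) ** (B - C) = A ** B - A ** C"
  by (simp add: matrix_matrix_mult_def vec_eq_iff sum_subtractf right_diff_distrib)

lemma transpose_add: "transpose ((A::real^'n^'m) + B) = transpose A + transpose B"
  by (simp add: transpose_def vec_eq_iff)

lemma transpose_diff: "transpose ((A::real^'n^'m) - B) = transpose A - transpose B"
  by (simp add: transpose_def vec_eq_iff)

text \<open>Along A (I + t E_ij), B (I - t E_ji) the product is constant, as E_ij^2 = 0 for i \<noteq> j.\<close>
lemma L_L2_local_min_gram_off_diagonal:
  fixes A :: "real^'r^'m" and B :: "real^'r^'n"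
  assumes min: "local_min_on (L_L2 L lam) UNIV (A, B)" and lam: "lam > 0" and ij: "i \<noteq> j"
  shows "(transpose A ** A) $ j $ i = (transpose B ** B) $ j $ i"
proof -
  let ?X = "matrix_unit i j"
  have XX: "?X ** ?X = 0" using matrix_unit_square[of i j] ij by simp
  have "A \<bullet> (A ** ?X) = B \<bullet> (B ** transpose ?X)"
  proof (rule L_L2_local_min_product_preserving_curve[OF min lam, where a = "\<lambda>t. t" and b = "\<lambda>t. - t"])
    fix t :: real
    have "(A + t *\<^sub>R (A ** ?X)) ** transpose (B + (- t) *\<^sub>R (B ** transpose ?X))
        = (A + t *\<^sub>R (A ** ?X)) ** (transpose B - t *\<^sub>R (?X ** transpose B))"
      by (simp add: transpose_add transpose_diff transpose_scalar matrix_transpose_mul)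
    also have "\<dots> = A ** transpose B - (t * t) *\<^sub>R (A ** (?X ** ?X) ** transpose B)"
      by (simp add: matrix_add_rdistrib matrix_diff_ldistrib matrix_add_ldistrib matrix_scalar_ac
          scalar_matrix_assoc[symmetric] matrix_mul_assoc algebra_simps)
    finally show "(A + t *\<^sub>R (A ** ?X)) ** transpose (B + (- t) *\<^sub>R (B ** transpose ?X)) = A ** transpose B"
      by (simp add: XX)
  qed (auto intro!: derivative_eq_intros)
  then show ?thesis
    by (simp add: inner_mult_matrix_unit transpose_matrix_unit transpose_mult_self_symmetric[of B i j])
qed

text \<open>Along A (I + t E_ii), B (I + t E_ii)^{-1} with (I + t E_ii)^{-1} = I + (1/(1+t) - 1) E_ii.\<close>
lemma L_L2_local_min_gram_diagonal:
  fixes A :: "real^'r^'m" and B :: "real^'r^'n"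
  assumes min: "local_min_on (L_L2 L lam) UNIV (A, B)" and lam: "lam > 0"
  shows "(transpose A ** A) $ i $ i = (transpose B ** B) $ i $ i"
proof -
  let ?X = "matrix_unit i i"
  have AXX: "A ** ?X ** ?X = A ** ?X" using matrix_unit_square[of i i] by (simp add: matrix_mul_assoc[symmetric])
  have "A \<bullet> (A ** ?X) = B \<bullet> (B ** ?X)"
  proof (rule L_L2_local_min_product_preserving_curve[OF min lam, where a = "\<lambda>t. t" and b = "\<lambda>t. 1 / (1 + t) - 1"])
    fix t :: real assume t: "\<bar>t\<bar> < 1/2"
    define s where "s = 1 / (1 + t) - 1"
    have st: "s + t + t * s = 0" using t by (simp add: s_def field_simps)
    have "(A + t *\<^sub>R (A ** ?X)) ** transpose (B + s *\<^sub>R (B ** ?X))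
        = (A + t *\<^sub>R (A ** ?X)) ** (transpose B + s *\<^sub>R (?X ** transpose B))"
      by (simp add: transpose_add transpose_scalar matrix_transpose_mul transpose_matrix_unit)
    also have "\<dots> = A ** transpose B + (s + t + t * s) *\<^sub>R (A ** ?X ** transpose B)"
      by (simp add: matrix_add_rdistrib matrix_add_ldistrib matrix_scalar_ac
          scalar_matrix_assoc[symmetric] matrix_mul_assoc algebra_simps AXX)
    also have "\<dots> = A ** transpose B" by (simp add: st)
    finally show "(A + t *\<^sub>R (A ** ?X)) ** transpose (B + (1 / (1 + t) - 1) *\<^sub>R (B ** ?X)) = A ** transpose B"
      by (simp add: s_def)
  next
    show "((\<lambda>t. 1 / (1 + t) - 1) has_real_derivative -1) (at 0)"
      by (rule derivative_eq_intros refl | simp)+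
  qed (auto intro!: derivative_eq_intros)
  then show ?thesis by (simp add: inner_mult_matrix_unit)
qed

theorem L_L2_local_min_balanced:
  fixes A :: "real^'r^'m" and B :: "real^'r^'n"
  assumes "local_min_on (L_L2 L lam) UNIV (A, B)" and "lam > 0"
  shows "transpose A ** A = transpose B ** B"
  using L_L2_local_min_gram_off_diagonal[OF assms] L_L2_local_min_gram_diagonal[OF assms]
  by (metis vec_eq_iff)

lemma not_local_min_on_sequence:
  fixes f :: "'a::metric_space \<Rightarrow> real"
  assumes x: "x \<in> M" and not_min: "\<not> local_min_on f M x"
  obtains xs where "\<And>k. xs k \<in> M" "xs \<longlonglongrightarrow> x" "\<And>k. f (xs k) < f x"
proof -
  have "\<exists>y. y \<in> M \<and> dist y x < inverse (real (Suc k)) \<and> f y < f x" for k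
  proof (rule ccontr)
    assume "\<nexists>y. y \<in> M \<and> dist y x < inverse (real (Suc k)) \<and> f y < f x"
    then have "\<forall>y\<in>ball x (inverse (real (Suc k))) \<inter> M. f x \<le> f y"
      by (auto simp: dist_commute not_less)
    then have "local_min_on f M x"
      using x unfolding local_min_on_def
      by (intro conjI exI[of _ "ball x (inverse (real (Suc k)))"]) auto
    with not_min show False ..
  qed
  then obtain xs where "\<forall>k. xs k \<in> M \<and> dist (xs k) x < inverse (real (Suc k)) \<and> f (xs k) < f x"
    using choice[of "\<lambda>k y. y \<in> M \<and> dist y x < inverse (real (Suc k)) \<and> f y < f x"] by blast
  then have xs: "\<And>k. xs k \<in> M" "\<And>k. dist (xs k) x < inverse (real (Suc k))" "\<And>k. f (xs k) < f x"
    by auto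
  have "(\<lambda>k. dist (xs k) x) \<longlonglongrightarrow> 0"
  proof (rule tendsto_sandwich[OF _ _ tendsto_const LIMSEQ_inverse_real_of_nat])
    show "\<forall>\<^sub>F k in sequentially. dist (xs k) x \<le> inverse (real (Suc k))"
      by (intro always_eventually allI less_imp_le xs(2))
  qed simp
  then have "xs \<longlonglongrightarrow> x" by (rule tendsto_dist_iff[THEN iffD2])
  with xs that show ?thesis by blast
qed

lemma frob_sq_balanced_factor_le:
  fixes A :: "real^'r^'m" and B :: "real^'r^'n"
  assumes "transpose A ** A = transpose B ** B"
  shows "frob_sq A \<le> (frob_sq (A ** transpose B) + real CARD('n)) / 2"
  using nuclear_norm_le_frob_sq[of "A ** transpose B"] nuclear_norm_balanced[OF assms] by simp

lemma orthogonal_matrix_mult_transpose_invariant: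
  fixes A :: "real^'r^'m" and B :: "real^'r^'n"
  assumes "orthogonal_matrix Q"
  shows "(A ** Q) ** transpose (B ** Q) = A ** transpose B"
proof -
  have "(A ** Q) ** transpose (B ** Q) = A ** (Q ** transpose Q) ** transpose B"
    unfolding matrix_transpose_mul by (simp add: matrix_mul_assoc)
  then show ?thesis using assms by (simp add: orthogonal_matrix_def)
qed

lemma orthogonal_matrix_balanced_invariant:
  fixes A :: "real^'r^'m" and B :: "real^'r^'n" and Q :: "real^'k^'r"
  assumes "transpose A ** A = transpose B ** B"
  shows "transpose (A ** Q) ** (A ** Q) = transpose (B ** Q) ** (B ** Q)"
proof -
  have e: "transpose (X ** Q) ** (X ** Q) = transpose Q ** (transpose X ** X) ** Q"
    for X :: "real^'r^'a" by (simp add: matrix_transpose_mul matrix_mul_assoc)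
  show ?thesis unfolding e assms ..
qed

lemma balanced_factorization_sequence:
  fixes Ws :: "nat \<Rightarrow> real^'n^'m"
  assumes rk: "\<And>k. rank (Ws k) \<le> CARD('r)"
  obtains F :: "nat \<Rightarrow> (real^'r^'m) \<times> (real^'r^'n)"
  where "\<And>k. fst (F k) ** transpose (snd (F k)) = Ws k"
    "\<And>k. transpose (fst (F k)) ** fst (F k) = transpose (snd (F k)) ** snd (F k)"
proof -
  have "\<exists>F :: (real^'r^'m) \<times> (real^'r^'n). fst F ** transpose (snd F) = Ws k
      \<and> transpose (fst F) ** fst F = transpose (snd F) ** snd F" for k
  proof -
    obtain A :: "real^'r^'m" and B :: "real^'r^'n"
      where "A ** transpose B = Ws k" "transpose A ** A = transpose B ** B"
      using balanced_factorization_exists[OF rk] .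
    then show ?thesis by (intro exI[of _ "(A, B)"]) simp
  qed
  then have "\<forall>k. \<exists>F :: (real^'r^'m) \<times> (real^'r^'n). fst F ** transpose (snd F) = Ws k
      \<and> transpose (fst F) ** fst F = transpose (snd F) ** snd F" by blast
  from choice[OF this] obtain F :: "nat \<Rightarrow> (real^'r^'m) \<times> (real^'r^'n)"
    where "\<forall>k. fst (F k) ** transpose (snd (F k)) = Ws k
      \<and> transpose (fst (F k)) ** fst (F k) = transpose (snd (F k)) ** snd (F k)" by blast
  with that show ?thesis by blast
qed

lemma bounded_balanced_factorizations:
  fixes F :: "'a \<Rightarrow> (real^'r^'m) \<times> (real^'r^'n)"
  assumes bal: "\<And>k. transpose (fst (F k)) ** fst (F k) = transpose (snd (F k)) ** snd (F k)"
    and bounded: "bounded (range (\<lambda>k. fst (F k) ** transpose (snd (F k))))"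
  shows "bounded (range F)"
proof -
  obtain c where c: "\<And>k. norm (fst (F k) ** transpose (snd (F k))) \<le> c"
    using bounded by (auto simp: bounded_iff)
  have "norm (F k) \<le> sqrt (c^2 + real CARD('n))" for k
  proof -
    have "(norm (F k))^2 = frob_sq (fst (F k)) + frob_sq (snd (F k))"
      by (simp add: frob_sq_eq_norm norm_Pair[of "fst (F k)" "snd (F k)", simplified])
    also have "\<dots> = 2 * frob_sq (fst (F k))"
      using frob_sq_balanced[OF bal[of k]] by simp
    also have "\<dots> \<le> c^2 + real CARD('n)"
      using frob_sq_balanced_factor_le[OF bal[of k]] power_mono[OF c[of k] norm_ge_zero, of 2]
      by (simp add: frob_sq_eq_norm)
    finally show ?thesis by (simp add: real_le_rsqrt)
  qed
  then show ?thesis unfolding bounded_iff by blast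
qed

lemma balanced_factorization_limit:
  fixes F :: "nat \<Rightarrow> (real^'r^'m) \<times> (real^'r^'n)"
  assumes bal: "\<And>k. transpose (fst (F k)) ** fst (F k) = transpose (snd (F k)) ** snd (F k)"
    and lim: "F \<longlonglongrightarrow> (A, B)" and lim_prod: "(\<lambda>k. fst (F k) ** transpose (snd (F k))) \<longlonglongrightarrow> W"
  shows "A ** transpose B = W" "transpose A ** A = transpose B ** B"
proof -
  have limA: "(\<lambda>k. fst (F k)) \<longlonglongrightarrow> A" and limB: "(\<lambda>k. snd (F k)) \<longlonglongrightarrow> B"
    using tendsto_fst[OF lim] tendsto_snd[OF lim] by simp_all
  have "(\<lambda>k. fst (F k) ** transpose (snd (F k))) \<longlonglongrightarrow> A ** transpose B"
    by (intro tendsto_matrix_mult tendsto_transpose limA limB)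
  with lim_prod show "A ** transpose B = W" by (rule LIMSEQ_unique[rotated])
  have "(\<lambda>k. transpose (fst (F k)) ** fst (F k)) \<longlonglongrightarrow> transpose A ** A"
    by (intro tendsto_matrix_mult tendsto_transpose limA)
  moreover have "(\<lambda>k. transpose (fst (F k)) ** fst (F k)) \<longlonglongrightarrow> transpose B ** B"
    unfolding bal by (intro tendsto_matrix_mult tendsto_transpose limB)
  ultimately show "transpose A ** A = transpose B ** B" by (rule LIMSEQ_unique)
qed

text \<open>The chosen factorizations need not converge to (A, B), but by compactness a subsequence
  converges to a balanced factorization of the same product, which is (A Q, B Q) for an orthogonal Q
  by uniqueness; rotating back by Q^T gives the claim.\<close>
lemma balanced_factorizations_converge:
  fixes A :: "real^'r^'m" and B :: "real^'r^'n" and Ws :: "nat \<Rightarrow> real^'n^'m"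
  assumes bal: "transpose A ** A = transpose B ** B"
    and rk: "\<And>k. rank (Ws k) \<le> CARD('r)" and lim: "Ws \<longlonglongrightarrow> A ** transpose B"
  obtains P :: "nat \<Rightarrow> (real^'r^'m) \<times> (real^'r^'n)" where "P \<longlonglongrightarrow> (A, B)"
    "\<And>k. fst (P k) ** transpose (snd (P k)) \<in> range Ws"
    "\<And>k. transpose (fst (P k)) ** fst (P k) = transpose (snd (P k)) ** snd (P k)"
proof -
  obtain F :: "nat \<Rightarrow> (real^'r^'m) \<times> (real^'r^'n)"
    where prodF: "\<And>k. fst (F k) ** transpose (snd (F k)) = Ws k"
      and balF: "\<And>k. transpose (fst (F k)) ** fst (F k) = transpose (snd (F k)) ** snd (F k)"
    using balanced_factorization_sequence[of Ws] rk by blast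
  have "bounded (range F)"
    using bounded_balanced_factorizations[OF balF] convergent_imp_bounded[OF lim] by (simp add: prodF)
  then obtain l r where r: "strict_mono r" and limFl: "(F \<circ> r) \<longlonglongrightarrow> l"
    using bounded_imp_convergent_subsequence by blast
  obtain A0 B0 where "l = (A0, B0)" by (cases l)
  with limFl have limF: "(F \<circ> r) \<longlonglongrightarrow> (A0, B0)" by simp
  have balFr: "transpose (fst ((F \<circ> r) k)) ** fst ((F \<circ> r) k) = transpose (snd ((F \<circ> r) k)) ** snd ((F \<circ> r) k)"
    for k by (simp add: balF)
  have "(\<lambda>k. fst ((F \<circ> r) k) ** transpose (snd ((F \<circ> r) k))) \<longlonglongrightarrow> A ** transpose B"
    using LIMSEQ_subseq_LIMSEQ[OF lim r] by (simp add: prodF o_def)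
  from balanced_factorization_limit[OF balFr limF this]
  have eq0: "A0 ** transpose B0 = A ** transpose B" and bal0: "transpose A0 ** A0 = transpose B0 ** B0" .
  obtain Q where Q: "orthogonal_matrix Q" "A0 = A ** Q" "B0 = B ** Q"
    using balanced_factorization_unique[OF bal bal0 eq0[symmetric]] by blast
  define P where "P k = (fst (F (r k)) ** transpose Q, snd (F (r k)) ** transpose Q)" for k
  have limA: "(\<lambda>k. fst (F (r k))) \<longlonglongrightarrow> A0" and limB: "(\<lambda>k. snd (F (r k))) \<longlonglongrightarrow> B0"
    using tendsto_fst[OF limF] tendsto_snd[OF limF] by (simp_all add: o_def)
  have "P \<longlonglongrightarrow> (A0 ** transpose Q, B0 ** transpose Q)"
    unfolding P_def by (intro tendsto_Pair tendsto_matrix_mult limA limB tendsto_const)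
  moreover have "A0 ** transpose Q = A" "B0 ** transpose Q = B"
    using Q by (simp_all add: orthogonal_matrix_def matrix_mul_assoc[symmetric])
  moreover have "fst (P k) ** transpose (snd (P k)) = Ws (r k)" for k
  proof -
    have "orthogonal_matrix (transpose Q)" using Q(1) by (simp add: orthogonal_matrix_transpose)
    then show ?thesis by (simp add: P_def orthogonal_matrix_mult_transpose_invariant prodF)
  qed
  moreover have "transpose (fst (P k)) ** fst (P k) = transpose (snd (P k)) ** snd (P k)" for k
    using orthogonal_matrix_balanced_invariant[OF balF[of "r k"]] by (simp add: P_def)
  ultimately show ?thesis by (intro that[of P]) auto
qed

theorem L_nuc_local_min_if_L_L2_local_min:
  fixes A :: "real^'r^'m" and B :: "real^'r^'n"
  assumes min: "local_min_on (L_L2 L lam) UNIV (A, B)"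
    and bal: "transpose A ** A = transpose B ** B"
  shows "local_min_on (L_nuc L lam) {W. rank W \<le> CARD('r)} (A ** transpose B)"
proof (rule ccontr)
  assume not_min: "\<not> ?thesis"
  have "A ** transpose B \<in> {W. rank W \<le> CARD('r)}" using rank_mult_transpose_le[of A B] by simp
  from not_local_min_on_sequence[OF this not_min] obtain Ws
    where rk: "\<And>k. Ws k \<in> {W. rank W \<le> CARD('r)}" and lim: "Ws \<longlonglongrightarrow> A ** transpose B"
      and less: "\<And>k. L_nuc L lam (Ws k) < L_nuc L lam (A ** transpose B)" by blast
  obtain P where limP: "P \<longlonglongrightarrow> (A, B)" and prod: "\<And>k. fst (P k) ** transpose (snd (P k)) \<in> range Ws"
    and balP: "\<And>k. transpose (fst (P k)) ** fst (P k) = transpose (snd (P k)) ** snd (P k)"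
    using balanced_factorizations_converge[OF bal _ lim] rk by blast
  obtain U where U: "open U" "(A, B) \<in> U" and le: "\<And>y. y \<in> U \<Longrightarrow> L_L2 L lam (A, B) \<le> L_L2 L lam y"
    using min by (auto simp: local_min_on_def)
  obtain k where "P k \<in> U"
    using topological_tendstoD[OF limP U] by (auto simp: eventually_sequentially)
  obtain j where Pk: "fst (P k) ** transpose (snd (P k)) = Ws j" using prod[of k] by blast
  have "L_nuc L lam (A ** transpose B) = L_L2 L lam (A, B)" by (rule L_L2_balanced[OF bal, symmetric])
  also have "\<dots> \<le> L_L2 L lam (P k)" by (rule le) fact
  also have "\<dots> = L_nuc L lam (Ws j)" using L_L2_balanced[OF balP[of k]] Pk by simp
  also have "\<dots> < L_nuc L lam (A ** transpose B)" by (rule less)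
  finally show False by simp
qed

theorem theorem1:
  fixes L :: "real^'n^'m \<Rightarrow> real"
    and lam :: real
    and A :: "real^'r^'m" and B :: "real^'r^'n"
  assumes "CARD('r) \<le> CARD('m)" and "CARD('r) \<le> CARD('n)"
    and "\<forall>W. L differentiable (at W)"
    and "lam > 0"
  shows "local_min_on (L_L2 L lam :: (real^'r^'m) \<times> (real^'r^'n) \<Rightarrow> real) UNIV (A, B) \<longleftrightarrow>
     (local_min_on (L_nuc L lam) {W. rank W \<le> CARD('r)} (A ** transpose B)
      \<and> transpose A ** A = transpose B ** B)"
proof
  assume min: "local_min_on (L_L2 L lam :: (real^'r^'m) \<times> (real^'r^'n) \<Rightarrow> real) UNIV (A, B)"
  have bal: "transpose A ** A = transpose B ** B"
    by (rule L_L2_local_min_balanced[OF min assms(4)])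
  with L_nuc_local_min_if_L_L2_local_min[OF min bal]
  show "local_min_on (L_nuc L lam) {W. rank W \<le> CARD('r)} (A ** transpose B)
      \<and> transpose A ** A = transpose B ** B" by blast
next
  assume min: "local_min_on (L_nuc L lam) {W. rank W \<le> CARD('r)} (A ** transpose B)
      \<and> transpose A ** A = transpose B ** B"
  show "local_min_on (L_L2 L lam :: (real^'r^'m) \<times> (real^'r^'n) \<Rightarrow> real) UNIV (A, B)"
    by (rule L_L2_local_min_if_L_nuc_local_min) (use min assms(4) in auto)
qed

end
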